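(* For any probability distributions $\mathbf{p},\mathbf{q}$ on $G_\Delta$ (i.e. $\mathbf{p},\mathbf{q}\in\mathbb{R}_{\ge0}^{G_\Delta}$ with $\|\mathbf{p}\|_1=\|\mathbf{q}\|_1=1$) and any $\sigma>0$, $\mathrm{KL}(\tilde H^\sigma_{\mathbf{p}}\,\|\,\tilde H^\sigma_{\mathbf{q}})\le\frac{\mathrm{EMD}(\mathbf{p},\mathbf{q})}{2\sigma^2}$.
   Context: $G_\Delta=\{(i/\Delta,j/\Delta):i,j\in\{0,\dots,\Delta-1\}\}$, $\tilde G_\Delta=\{(i/\Delta,j/\Delta):i,j\in\mathbb{Z}\}$. $\tilde H^\sigma_{\mathbf{p}}(a)=\sum_{a'\in G_\Delta}\frac1Z e^{-\|a-a'\|_2^2/(2\sigma^2)}\mathbf{p}(a')$ for $a\in\tilde G_\Delta$, with $Z=\sum_{d\in\tilde G_\Delta}e^{-\|d\|_2^2/(2\sigma^2)}$. $\mathrm{KL}(P\|Q)=\sum_a P(a)\ln(P(a)/Q(a))$. $\mathrm{EMD}(\mathbf{p},\mathbf{q})=\min_\gamma\sum_{x,y\in G_\Delta}\gamma(x,y)\|x-y\|_1$ over nonnegative couplings $\gamma$ with marginals $\mathbf{p},\mathbf{q}$. *)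

theory Defs
  imports "HOL-Analysis.Analysis"
begin

definition grid :: "nat \<Rightarrow> (real \<times> real) set" where
  "grid D = {(real i / real D, real j / real D) | i j. i < D \<and> j < D}"

definition grid_Z :: "nat \<Rightarrow> (real \<times> real) set" where
  "grid_Z D = {(real_of_int i / real D, real_of_int j / real D) | i j. True}"

definition sqdist2 :: "real \<times> real \<Rightarrow> real \<times> real \<Rightarrow> real" where
  "sqdist2 a b = (fst a - fst b)^2 + (snd a - snd b)^2"

definition l1dist :: "real \<times> real \<Rightarrow> real \<times> real \<Rightarrow> real" where
  "l1dist a b = \<bar>fst a - fst b\<bar> + \<bar>snd a - snd b\<bar>"

definition gaussZ :: "nat \<Rightarrow> real \<Rightarrow> real" where
  "gaussZ D \<sigma> = (\<Sum>\<^sub>\<infinity>d\<in>grid_Z D. exp (- sqdist2 d (0,0) / (2 * \<sigma>^2)))"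

definition Htilde :: "nat \<Rightarrow> real \<Rightarrow> (real \<times> real \<Rightarrow> real) \<Rightarrow> real \<times> real \<Rightarrow> real" where
  "Htilde D \<sigma> p a = (\<Sum>a'\<in>grid D. (1 / gaussZ D \<sigma>) * exp (- sqdist2 a a' / (2 * \<sigma>^2)) * p a')"

definition KL :: "('a \<Rightarrow> real) \<Rightarrow> ('a \<Rightarrow> real) \<Rightarrow> 'a set \<Rightarrow> real" where
  "KL P Q A = (\<Sum>\<^sub>\<infinity>a\<in>A. P a * ln (P a / Q a))"

definition EMD :: "nat \<Rightarrow> (real \<times> real \<Rightarrow> real) \<Rightarrow> (real \<times> real \<Rightarrow> real) \<Rightarrow> real" where
  "EMD D p q = Inf {(\<Sum>(x,y)\<in>grid D \<times> grid D. \<gamma> (x,y) * l1dist x y) | \<gamma>.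
      (\<forall>x\<in>grid D. \<forall>y\<in>grid D. \<gamma> (x,y) \<ge> 0) \<and>
      (\<forall>x\<in>grid D. (\<Sum>y\<in>grid D. \<gamma> (x,y)) = p x) \<and>
      (\<forall>y\<in>grid D. (\<Sum>x\<in>grid D. \<gamma> (x,y)) = q y)}"

end

(*
  A coupling gamma of p and q writes both smoothed distributions as the same mixture of discrete
  Gaussians N_x centred at grid points: H_p = sum gamma(x,y) N_x and H_q = sum gamma(x,y) N_y.
  The log-sum inequality (joint convexity of KL) gives KL(H_p || H_q) <= sum gamma(x,y) KL(N_x || N_y),
  and because the lattice is invariant under translation by x and under reflection, the first
  moments of N_x vanish, so KL(N_x || N_y) = |x - y|^2 / (2 sigma^2) exactly as for continuous
  Gaussians. On the unit square |x - y|^2 <= |x - y|_1; minimising over couplings yields EMD.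
*)

theory Submission
  imports Defs
begin

lemma has_sum_sum:
  fixes f :: "'i \<Rightarrow> 'a \<Rightarrow> 'b::topological_comm_monoid_add"
  assumes "finite I" and "\<And>i. i \<in> I \<Longrightarrow> (f i has_sum S i) A"
  shows "((\<lambda>a. \<Sum>i\<in>I. f i a) has_sum (\<Sum>i\<in>I. S i)) A"
  using assms by (induction I rule: finite_induct) (auto intro: has_sum_add)

text \<open>The hypothesis \<open>T \<ge> 0\<close> covers a non-summable \<open>f\<close>, whose \<open>infsum\<close> is \<open>0\<close>.\<close>

lemma infsum_le_has_sum:
  fixes f g :: "'a \<Rightarrow> real"
  assumes "(g has_sum T) A" and "\<And>x. x \<in> A \<Longrightarrow> f x \<le> g x" and "T \<ge> 0"
  shows "infsum f A \<le> T"
proof (cases "f summable_on A")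
  case True
  with assms(1,2) show ?thesis
    by (metis has_sum_infsum has_sum_mono)
next
  case False
  with assms(3) show ?thesis
    by (simp add: infsum_not_exists)
qed

lemma summable_on_product_nonneg:
  fixes f g :: "'a \<Rightarrow> real"
  assumes "f summable_on A" and "g summable_on B"
    and "\<And>x. x \<in> A \<Longrightarrow> f x \<ge> 0" and "\<And>y. y \<in> B \<Longrightarrow> g y \<ge> 0"
  shows "(\<lambda>(x, y). f x * g y) summable_on A \<times> B"
proof (rule summable_on_SigmaI[where g = "\<lambda>x. f x * infsum g B"])
  show "((\<lambda>y. case (x, y) of (x, y) \<Rightarrow> f x * g y) has_sum f x * infsum g B) B" for x
    using has_sum_cmult_right[OF has_sum_infsum[OF assms(2)]] by simp
  show "(\<lambda>x. f x * infsum g B) summable_on A"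
    using summable_on_cmult_left[OF assms(1)] .
  show "0 \<le> (case (x, y) of (x, y) \<Rightarrow> f x * g y)" if "x \<in> A" and "y \<in> B" for x y
    using assms(3,4) that by simp
qed

lemma log_sum_inequality:
  fixes w \<alpha> \<beta> :: "'i \<Rightarrow> real"
  assumes "finite I" and w: "\<And>i. i \<in> I \<Longrightarrow> w i \<ge> 0"
    and \<alpha>: "\<And>i. i \<in> I \<Longrightarrow> \<alpha> i > 0" and \<beta>: "\<And>i. i \<in> I \<Longrightarrow> \<beta> i > 0"
  shows "(\<Sum>i\<in>I. w i * \<alpha> i) * ln ((\<Sum>i\<in>I. w i * \<alpha> i) / (\<Sum>i\<in>I. w i * \<beta> i))
         \<le> (\<Sum>i\<in>I. w i * \<alpha> i * ln (\<alpha> i / \<beta> i))"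
proof -
  define A where "A = (\<Sum>i\<in>I. w i * \<alpha> i)"
  define B where "B = (\<Sum>i\<in>I. w i * \<beta> i)"
  have w\<alpha>: "w i * \<alpha> i \<ge> 0" if "i \<in> I" for i
    using w[OF that] \<alpha>[OF that] by simp
  have split: "(\<Sum>i\<in>I. w i * \<alpha> i * (L - ln (\<alpha> i / \<beta> i)))
      = A * L - (\<Sum>i\<in>I. w i * \<alpha> i * ln (\<alpha> i / \<beta> i))" for L
    by (simp add: A_def right_diff_distrib sum_subtractf sum_distrib_right)
  have "A * ln (A / B) \<le> (\<Sum>i\<in>I. w i * \<alpha> i * ln (\<alpha> i / \<beta> i))"
  proof (cases "\<forall>i\<in>I. w i * \<alpha> i = 0")
    case True
    then have "A = 0" and "(\<Sum>i\<in>I. w i * \<alpha> i * ln (\<alpha> i / \<beta> i)) = 0"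
      unfolding A_def by (auto intro: sum.neutral)
    then show ?thesis
      by simp
  next
    case False
    then obtain j where j: "j \<in> I" "w j * \<alpha> j \<noteq> 0"
      by blast
    then have "w j > 0"
      using w[OF j(1)] by (cases "w j = 0") auto
    then have "0 < w j * \<beta> j"
      using \<beta>[OF j(1)] by simp
    also have "w j * \<beta> j \<le> B"
      unfolding B_def using w \<beta> by (intro member_le_sum j(1) \<open>finite I\<close>) (simp add: less_imp_le)
    finally have "B > 0" .
    have "A = 0 \<longleftrightarrow> (\<forall>i\<in>I. w i * \<alpha> i = 0)"
      unfolding A_def by (intro sum_nonneg_eq_0_iff \<open>finite I\<close> w\<alpha>)
    with False have "A \<noteq> 0"
      by blast
    moreover have "A \<ge> 0"
      unfolding A_def by (intro sum_nonneg w\<alpha>)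
    ultimately have "A > 0"
      by simp
    text \<open>Each term is bounded by \<open>ln t \<le> t - 1\<close> at \<open>t = \<beta> i A / (\<alpha> i B)\<close>; the bounds sum to \<open>A - A\<close>.\<close>
    have termwise: "w i * \<alpha> i * (ln (A / B) - ln (\<alpha> i / \<beta> i)) \<le> w i * \<beta> i * (A / B) - w i * \<alpha> i"
      if i: "i \<in> I" for i
    proof -
      have "ln (A / B) - ln (\<alpha> i / \<beta> i) = ln ((A / B) / (\<alpha> i / \<beta> i))"
        using \<alpha>[OF i] \<beta>[OF i] \<open>A > 0\<close> \<open>B > 0\<close> by (simp add: ln_div ln_mult)
      also have "\<dots> \<le> (A / B) / (\<alpha> i / \<beta> i) - 1"
        using \<alpha>[OF i] \<beta>[OF i] \<open>A > 0\<close> \<open>B > 0\<close> by (intro ln_le_minus_one) simp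
      finally have "w i * \<alpha> i * (ln (A / B) - ln (\<alpha> i / \<beta> i)) \<le> w i * \<alpha> i * ((A / B) / (\<alpha> i / \<beta> i) - 1)"
        by (intro mult_left_mono w\<alpha> i)
      also have "\<dots> = w i * \<beta> i * (A / B) - w i * \<alpha> i"
        using \<alpha>[OF i] by (simp add: field_simps)
      finally show ?thesis .
    qed
    have "A * ln (A / B) - (\<Sum>i\<in>I. w i * \<alpha> i * ln (\<alpha> i / \<beta> i))
        \<le> (\<Sum>i\<in>I. w i * \<beta> i * (A / B) - w i * \<alpha> i)"
      unfolding split[symmetric] by (intro sum_mono termwise)
    also have "\<dots> = B * (A / B) - A"
      by (simp only: sum_subtractf sum_distrib_right[symmetric] A_def[symmetric] B_def[symmetric])
    also have "\<dots> = 0"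
      using \<open>B > 0\<close> by simp
    finally show ?thesis
      by simp
  qed
  then show ?thesis
    by (simp only: A_def B_def)
qed

lemma grid_Z_eq_range:
  "grid_Z D = range (\<lambda>(i::int, j::int). (of_int i / real D, of_int j / real D))"
  by (auto simp: grid_Z_def)

lemma zero_in_grid_Z: "(0, 0) \<in> grid_Z D"
  unfolding grid_Z_def by (intro CollectI exI[of _ 0]) simp

lemma grid_Z_diff:
  assumes "x \<in> grid_Z D" and "y \<in> grid_Z D"
  shows "(fst x - fst y, snd x - snd y) \<in> grid_Z D"
proof -
  obtain i j where x: "x = (of_int i / real D, of_int j / real D)"
    using assms(1) unfolding grid_Z_def by blast
  obtain i' j' where y: "y = (of_int i' / real D, of_int j' / real D)"
    using assms(2) unfolding grid_Z_def by blast
  have "(fst x - fst y, snd x - snd y) = (of_int (i - i') / real D, of_int (j - j') / real D)"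
    by (simp add: x y diff_divide_distrib)
  then show ?thesis
    unfolding grid_Z_def by blast
qed

lemma grid_Z_uminus: "x \<in> grid_Z D \<Longrightarrow> (- fst x, - snd x) \<in> grid_Z D"
  using grid_Z_diff[OF zero_in_grid_Z] by fastforce

lemma grid_Z_add:
  "x \<in> grid_Z D \<Longrightarrow> y \<in> grid_Z D \<Longrightarrow> (fst x + fst y, snd x + snd y) \<in> grid_Z D"
  using grid_Z_diff[of x D "(- fst y, - snd y)"] grid_Z_uminus by fastforce

lemma finite_grid: "finite (grid D)"
proof -
  have "grid D = (\<lambda>(i, j). (real i / real D, real j / real D)) ` ({..<D} \<times> {..<D})"
    unfolding grid_def by auto
  then show ?thesis
    by simp
qed

lemma grid_subset_grid_Z: "grid D \<subseteq> grid_Z D"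
proof
  fix x
  assume "x \<in> grid D"
  then obtain i j :: nat where "x = (real i / real D, real j / real D)"
    unfolding grid_def by blast
  then show "x \<in> grid_Z D"
    unfolding grid_Z_def by (intro CollectI exI[of _ "int i"] exI[of _ "int j"]) simp
qed

lemma sqdist2_le_l1dist_grid:
  assumes "x \<in> grid D" and "y \<in> grid D"
  shows "sqdist2 x y \<le> l1dist x y"
proof -
  have unit: "fst z \<in> {0..1} \<and> snd z \<in> {0..1}" if "z \<in> grid D" for z
    using that unfolding grid_def by (auto simp: divide_le_eq)
  have sq_le_abs: "t ^ 2 \<le> \<bar>t\<bar>" if "\<bar>t\<bar> \<le> 1" for t :: real
    using mult_left_mono[OF that, of "\<bar>t\<bar>"] by (simp add: power2_eq_square)
  have "\<bar>fst x - fst y\<bar> \<le> 1" and "\<bar>snd x - snd y\<bar> \<le> 1"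
    using unit[OF assms(1)] unit[OF assms(2)] by auto
  then show ?thesis
    unfolding sqdist2_def l1dist_def by (intro add_mono sq_le_abs)
qed

lemma sqdist2_diff_eq:
  "sqdist2 a y - sqdist2 a x
     = sqdist2 x y + 2 * (fst x - fst y) * (fst a - fst x) + 2 * (snd x - snd y) * (snd a - snd x)"
  unfolding sqdist2_def by (simp add: power2_eq_square algebra_simps)

subsection \<open>The discrete Gaussian on the lattice\<close>

definition gauss_kernel :: "real \<Rightarrow> real \<times> real \<Rightarrow> real \<times> real \<Rightarrow> real" where
  "gauss_kernel s a b = exp (- sqdist2 a b / s)"

lemma gauss_kernel_pos: "gauss_kernel s a b > 0"
  by (simp add: gauss_kernel_def)

lemma summable_exp_neg_square_times_linear:
  fixes c :: real
  assumes "c > 0"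
  shows "summable (\<lambda>n::nat. exp (- c * real n ^ 2) * (1 + real n))"
proof (rule summable_comparison_test'[where g = "\<lambda>n. exp (-1) ^ n" and N = "nat \<lceil>2 / c\<rceil>"])
  show "summable (\<lambda>n. exp (-1::real) ^ n)"
    by (rule summable_geometric) simp
  fix n :: nat
  assume "nat \<lceil>2 / c\<rceil> \<le> n"
  then have "2 \<le> c * real n"
    using assms by (simp add: field_simps)
  then have "2 * real n \<le> c * real n * real n"
    by (intro mult_right_mono) auto
  then have gap: "real n - c * real n ^ 2 \<le> - real n"
    by (simp add: power2_eq_square algebra_simps)
  have "exp (- c * real n ^ 2) * (1 + real n) \<le> exp (- c * real n ^ 2) * exp (real n)"
    by (intro mult_left_mono) (auto simp: exp_ge_add_one_self add.commute)
  also have "\<dots> \<le> exp (- real n)"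
    using gap by (simp flip: exp_add)
  also have "\<dots> = exp (-1) ^ n"
    by (simp flip: exp_of_nat_mult)
  finally show "norm (exp (- c * real n ^ 2) * (1 + real n)) \<le> exp (-1) ^ n"
    by simp
qed

lemma summable_on_int_exp_neg_square_times_linear:
  fixes c :: real
  assumes "c > 0"
  shows "(\<lambda>i::int. exp (- c * of_int i ^ 2) * (1 + \<bar>of_int i\<bar>)) summable_on UNIV"
proof -
  define F where "F i = exp (- c * of_int i ^ 2) * (1 + \<bar>of_int i\<bar>)" for i :: int
  have nat: "summable (\<lambda>n::nat. exp (- c * real n ^ 2) * (1 + real n))"
    using summable_exp_neg_square_times_linear[OF assms] .
  have "F summable_on range int"
    using nat by (subst summable_on_reindex)
      (auto simp: F_def o_def inj_on_def summable_on_UNIV_nonneg_real_iff)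
  moreover have "F summable_on range (\<lambda>n::nat. - int n)"
    using nat by (subst summable_on_reindex)
      (auto simp: F_def o_def inj_on_def summable_on_UNIV_nonneg_real_iff)
  ultimately have "F summable_on (range int \<union> range (\<lambda>n::nat. - int n))"
    by (rule summable_on_union)
  moreover have "i \<in> range int \<union> range (\<lambda>n::nat. - int n)" for i :: int
    by (cases i rule: int_cases2) auto
  ultimately show ?thesis
    unfolding F_def by (metis UNIV_eq_I)
qed

lemma summable_on_grid_Z_gauss_kernel_weighted:
  assumes "D > 0" and "s > 0"
  shows "(\<lambda>d. gauss_kernel s d (0, 0) * (1 + \<bar>fst d\<bar> + \<bar>snd d\<bar>)) summable_on grid_Z D"
proof -
  define \<phi> where "\<phi> = (\<lambda>(i::int, j::int). (of_int i / real D, of_int j / real D))"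
  define c where "c = 1 / (real D ^ 2 * s)"
  define F where "F i = exp (- c * of_int i ^ 2) * (1 + \<bar>of_int i\<bar>)" for i :: int
  have "c > 0"
    using assms by (simp add: c_def)
  then have F: "F summable_on UNIV"
    unfolding F_def by (rule summable_on_int_exp_neg_square_times_linear)
  have FF: "(\<lambda>(i, j). F i * F j) summable_on UNIV \<times> UNIV"
    by (intro summable_on_product_nonneg[OF F F]) (simp_all add: F_def)
  have bound: "gauss_kernel s (\<phi> (i, j)) (0, 0) * (1 + \<bar>fst (\<phi> (i, j))\<bar> + \<bar>snd (\<phi> (i, j))\<bar>) \<le> F i * F j"
    for i j
  proof -
    have "sqdist2 (\<phi> (i, j)) (0, 0) / s = c * of_int i ^ 2 + c * of_int j ^ 2"
      using assms by (simp add: \<phi>_def sqdist2_def c_def power_divide field_simps)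
    then have kernel: "gauss_kernel s (\<phi> (i, j)) (0, 0) = exp (- c * of_int i ^ 2) * exp (- c * of_int j ^ 2)"
      unfolding gauss_kernel_def by (simp flip: exp_add)
    have "\<bar>of_int k / real D\<bar> \<le> \<bar>of_int k :: real\<bar>" for k :: int
      using assms by (simp add: abs_divide divide_le_eq mult_le_cancel_left1 abs_mult)
    then have "\<bar>fst (\<phi> (i, j))\<bar> \<le> \<bar>of_int i\<bar>" and "\<bar>snd (\<phi> (i, j))\<bar> \<le> \<bar>of_int j\<bar>"
      by (simp_all add: \<phi>_def)
    moreover have "0 \<le> \<bar>of_int i :: real\<bar> * \<bar>of_int j\<bar>"
      by simp
    ultimately have "1 + \<bar>fst (\<phi> (i, j))\<bar> + \<bar>snd (\<phi> (i, j))\<bar> \<le> 1 + \<bar>of_int i\<bar> + \<bar>of_int j\<bar> + \<bar>of_int i\<bar> * \<bar>of_int j\<bar>"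
      by linarith
    also have "\<dots> = (1 + \<bar>of_int i\<bar>) * (1 + \<bar>of_int j\<bar>)"
      by (simp add: algebra_simps)
    finally have weight: "1 + \<bar>fst (\<phi> (i, j))\<bar> + \<bar>snd (\<phi> (i, j))\<bar> \<le> (1 + \<bar>of_int i\<bar>) * (1 + \<bar>of_int j\<bar>)" .
    show ?thesis
      unfolding kernel F_def using mult_left_mono[OF weight, of "exp (- c * of_int i ^ 2) * exp (- c * of_int j ^ 2)"]
      by (simp add: mult_ac)
  qed
  have "((\<lambda>d. gauss_kernel s d (0, 0) * (1 + \<bar>fst d\<bar> + \<bar>snd d\<bar>)) \<circ> \<phi>) summable_on UNIV"
    by (rule summable_on_comparison_test[OF FF[unfolded UNIV_Times_UNIV]])
      (auto simp: bound intro!: mult_nonneg_nonneg less_imp_le[OF gauss_kernel_pos])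
  moreover have "inj \<phi>"
    using assms by (auto simp: inj_def \<phi>_def)
  ultimately show ?thesis
    by (simp add: grid_Z_eq_range summable_on_reindex \<phi>_def)
qed

lemma summable_on_grid_Z_gauss_kernel_dominated:
  fixes f :: "real \<times> real \<Rightarrow> real"
  assumes "D > 0" and "s > 0"
    and "\<And>d. \<bar>f d\<bar> \<le> C * (gauss_kernel s d (0, 0) * (1 + \<bar>fst d\<bar> + \<bar>snd d\<bar>))"
  shows "f summable_on grid_Z D"
proof -
  have "(\<lambda>d. C * (gauss_kernel s d (0, 0) * (1 + \<bar>fst d\<bar> + \<bar>snd d\<bar>))) summable_on grid_Z D"
    by (intro summable_on_cmult_right summable_on_grid_Z_gauss_kernel_weighted assms(1,2))
  then have "(\<lambda>d. norm (f d)) summable_on grid_Z D"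
    by (rule Infinite_Sum.abs_summable_on_comparison_test') (simp add: assms(3))
  then show ?thesis
    by (rule summable_on_iff_abs_summable_on_real[THEN iffD2])
qed

lemma summable_on_grid_Z_gauss_kernel:
  assumes "D > 0" and "s > 0"
  shows "(\<lambda>d. gauss_kernel s d (0, 0)) summable_on grid_Z D"
proof (rule summable_on_grid_Z_gauss_kernel_dominated[OF assms, where C = 1])
  fix d :: "real \<times> real"
  have "gauss_kernel s d (0, 0) \<le> gauss_kernel s d (0, 0) * (1 + \<bar>fst d\<bar> + \<bar>snd d\<bar>)"
    using gauss_kernel_pos[of s d "(0, 0)"] by (simp add: mult_le_cancel_left1)
  then show "\<bar>gauss_kernel s d (0, 0)\<bar> \<le> 1 * (gauss_kernel s d (0, 0) * (1 + \<bar>fst d\<bar> + \<bar>snd d\<bar>))"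
    using gauss_kernel_pos[of s d "(0, 0)"] by simp
qed

lemma has_sum_gauss_kernel_first_moment:
  assumes "D > 0" and "s > 0"
  shows "((\<lambda>d. gauss_kernel s d (0, 0) * (c1 * fst d + c2 * snd d)) has_sum 0) (grid_Z D)"
proof -
  define f where "f d = gauss_kernel s d (0, 0) * (c1 * fst d + c2 * snd d)" for d
  have "f summable_on grid_Z D"
  proof (rule summable_on_grid_Z_gauss_kernel_dominated[OF assms, where C = "\<bar>c1\<bar> + \<bar>c2\<bar>"])
    fix d :: "real \<times> real"
    have "\<bar>c1 * fst d + c2 * snd d\<bar> \<le> \<bar>c1\<bar> * \<bar>fst d\<bar> + \<bar>c2\<bar> * \<bar>snd d\<bar>"
      using abs_triangle_ineq[of "c1 * fst d" "c2 * snd d"] by (simp add: abs_mult)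
    also have "\<dots> \<le> \<bar>c1\<bar> * (1 + \<bar>fst d\<bar> + \<bar>snd d\<bar>) + \<bar>c2\<bar> * (1 + \<bar>fst d\<bar> + \<bar>snd d\<bar>)"
      by (intro add_mono mult_left_mono) simp_all
    finally have "\<bar>c1 * fst d + c2 * snd d\<bar> \<le> (\<bar>c1\<bar> + \<bar>c2\<bar>) * (1 + \<bar>fst d\<bar> + \<bar>snd d\<bar>)"
      by (simp only: distrib_right)
    then have "gauss_kernel s d (0, 0) * \<bar>c1 * fst d + c2 * snd d\<bar>
        \<le> gauss_kernel s d (0, 0) * ((\<bar>c1\<bar> + \<bar>c2\<bar>) * (1 + \<bar>fst d\<bar> + \<bar>snd d\<bar>))"
      using gauss_kernel_pos[of s d "(0, 0)"] by (intro mult_left_mono) simp_all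
    also have "\<dots> = (\<bar>c1\<bar> + \<bar>c2\<bar>) * (gauss_kernel s d (0, 0) * (1 + \<bar>fst d\<bar> + \<bar>snd d\<bar>))"
      by (rule mult.left_commute)
    finally show "\<bar>f d\<bar> \<le> (\<bar>c1\<bar> + \<bar>c2\<bar>) * (gauss_kernel s d (0, 0) * (1 + \<bar>fst d\<bar> + \<bar>snd d\<bar>))"
      using gauss_kernel_pos[of s d "(0, 0)"] by (simp add: f_def abs_mult)
  qed
  moreover have "infsum f (grid_Z D) = 0"
  proof -
    have odd: "f (- fst d, - snd d) = - f d" for d
      by (simp add: f_def gauss_kernel_def sqdist2_def ring_distribs)
    have "bij_betw (\<lambda>d. (- fst d, - snd d)) (grid_Z D) (grid_Z D)"
      by (rule bij_betw_byWitness[where f' = "\<lambda>d. (- fst d, - snd d)"]) (auto intro: grid_Z_uminus)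
    then have "infsum f (grid_Z D) = infsum (\<lambda>d. f (- fst d, - snd d)) (grid_Z D)"
      by (rule infsum_reindex_bij_betw[symmetric])
    also have "\<dots> = - infsum f (grid_Z D)"
      unfolding odd by (rule infsum_uminus)
    finally show ?thesis
      by simp
  qed
  ultimately show ?thesis
    by (simp add: has_sum_iff f_def [abs_def])
qed

text \<open>By \<open>sqdist2_diff_eq\<close> the summand is \<open>sqdist2 x y\<close> plus a term linear in \<open>a - x\<close>,
  and the latter has mean zero around the lattice point \<open>x\<close>.\<close>

lemma has_sum_gauss_kernel_sqdist2_diff:
  assumes "D > 0" and "s > 0" and "x \<in> grid_Z D"
  shows "((\<lambda>a. gauss_kernel s a x * (sqdist2 a y - sqdist2 a x))
           has_sum sqdist2 x y * (\<Sum>\<^sub>\<infinity>d\<in>grid_Z D. gauss_kernel s d (0, 0))) (grid_Z D)"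
proof -
  define Z where "Z = (\<Sum>\<^sub>\<infinity>d\<in>grid_Z D. gauss_kernel s d (0, 0))"
  define h where "h d = sqdist2 x y * gauss_kernel s d (0, 0)
    + gauss_kernel s d (0, 0) * (2 * (fst x - fst y) * fst d + 2 * (snd x - snd y) * snd d)" for d
  have "(h has_sum sqdist2 x y * Z + 0) (grid_Z D)"
    unfolding h_def[abs_def] Z_def using assms(1,2)
    by (intro has_sum_add has_sum_cmult_right has_sum_infsum summable_on_grid_Z_gauss_kernel
        has_sum_gauss_kernel_first_moment)
  moreover have "h (fst a - fst x, snd a - snd x) = gauss_kernel s a x * (sqdist2 a y - sqdist2 a x)" for a
  proof -
    have "gauss_kernel s (fst a - fst x, snd a - snd x) (0, 0) = gauss_kernel s a x"
      by (simp add: gauss_kernel_def sqdist2_def)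
    then show ?thesis
      unfolding h_def sqdist2_diff_eq by (simp add: algebra_simps)
  qed
  then have "((\<lambda>a. gauss_kernel s a x * (sqdist2 a y - sqdist2 a x)) has_sum sqdist2 x y * Z) (grid_Z D)
      \<longleftrightarrow> (h has_sum sqdist2 x y * Z + 0) (grid_Z D)"
    using assms(3)
    by (intro has_sum_reindex_bij_witness[where i = "\<lambda>d. (fst d + fst x, snd d + snd x)"
          and j = "\<lambda>a. (fst a - fst x, snd a - snd x)"]) (simp_all add: grid_Z_add grid_Z_diff)
  ultimately show ?thesis
    unfolding Z_def by blast
qed

lemma gaussZ_ge_1:
  assumes "D > 0" and "\<sigma> > 0"
  shows "gaussZ D \<sigma> \<ge> 1"
proof -
  have "(\<Sum>d\<in>{(0, 0)}. gauss_kernel (2 * \<sigma>^2) d (0, 0)) \<le> (\<Sum>\<^sub>\<infinity>d\<in>grid_Z D. gauss_kernel (2 * \<sigma>^2) d (0, 0))"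
    using assms zero_in_grid_Z
    by (intro finite_sum_le_infsum summable_on_grid_Z_gauss_kernel) (auto simp: gauss_kernel_def)
  then show ?thesis
    by (simp add: gaussZ_def gauss_kernel_def sqdist2_def)
qed

subsection \<open>Couplings and the transport bound\<close>

definition coupling :: "'a set \<Rightarrow> ('a \<Rightarrow> real) \<Rightarrow> ('a \<Rightarrow> real) \<Rightarrow> ('a \<times> 'a \<Rightarrow> real) \<Rightarrow> bool" where
  "coupling A p q \<gamma> \<longleftrightarrow> (\<forall>x\<in>A. \<forall>y\<in>A. \<gamma> (x, y) \<ge> 0)
     \<and> (\<forall>x\<in>A. (\<Sum>y\<in>A. \<gamma> (x, y)) = p x) \<and> (\<forall>y\<in>A. (\<Sum>x\<in>A. \<gamma> (x, y)) = q y)"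

lemma EMD_eq_Inf_coupling:
  "EMD D p q = Inf ((\<lambda>\<gamma>. \<Sum>(x, y)\<in>grid D \<times> grid D. \<gamma> (x, y) * l1dist x y) ` {\<gamma>. coupling (grid D) p q \<gamma>})"
  unfolding EMD_def coupling_def setcompr_eq_image ..

lemma coupling_product:
  assumes "\<forall>x\<in>A. p x \<ge> 0" and "sum p A = 1" and "\<forall>y\<in>A. q y \<ge> 0" and "sum q A = 1"
  shows "coupling A p q (\<lambda>(x, y). p x * q y)"
  using assms by (simp add: coupling_def flip: sum_distrib_left sum_distrib_right)

lemma coupling_sum_fst:
  assumes "coupling A p q \<gamma>"
  shows "(\<Sum>x\<in>A. f x * p x) = (\<Sum>i\<in>A \<times> A. \<gamma> i * f (fst i))"
proof -
  have "(\<Sum>x\<in>A. f x * p x) = (\<Sum>x\<in>A. \<Sum>y\<in>A. \<gamma> (x, y) * f x)"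
  proof (rule sum.cong[OF refl])
    fix x
    assume "x \<in> A"
    then have "p x = (\<Sum>y\<in>A. \<gamma> (x, y))"
      using assms by (simp add: coupling_def)
    then show "f x * p x = (\<Sum>y\<in>A. \<gamma> (x, y) * f x)"
      by (simp add: sum_distrib_left mult.commute)
  qed
  also have "\<dots> = (\<Sum>i\<in>A \<times> A. \<gamma> i * f (fst i))"
    by (simp add: sum.cartesian_product case_prod_unfold)
  finally show ?thesis .
qed

lemma coupling_sum_snd:
  assumes "coupling A p q \<gamma>"
  shows "(\<Sum>y\<in>A. f y * q y) = (\<Sum>i\<in>A \<times> A. \<gamma> i * f (snd i))"
proof -
  have "(\<Sum>y\<in>A. f y * q y) = (\<Sum>y\<in>A. \<Sum>x\<in>A. \<gamma> (x, y) * f y)"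
  proof (rule sum.cong[OF refl])
    fix y
    assume "y \<in> A"
    then have "q y = (\<Sum>x\<in>A. \<gamma> (x, y))"
      using assms by (simp add: coupling_def)
    then show "f y * q y = (\<Sum>x\<in>A. \<gamma> (x, y) * f y)"
      by (simp add: sum_distrib_left mult.commute)
  qed
  also have "\<dots> = (\<Sum>x\<in>A. \<Sum>y\<in>A. \<gamma> (x, y) * f y)"
    by (rule sum.swap)
  also have "\<dots> = (\<Sum>i\<in>A \<times> A. \<gamma> i * f (snd i))"
    by (simp add: sum.cartesian_product case_prod_unfold)
  finally show ?thesis .
qed

lemma KL_Htilde_le_coupling_cost:
  assumes "D > 0" and "\<sigma> > 0" and \<gamma>: "coupling (grid D) p q \<gamma>"
  shows "KL (Htilde D \<sigma> p) (Htilde D \<sigma> q) (grid_Z D)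
           \<le> (\<Sum>i\<in>grid D \<times> grid D. \<gamma> i * sqdist2 (fst i) (snd i)) / (2 * \<sigma>^2)"
proof -
  define s where "s = 2 * \<sigma>^2"
  define Z where "Z = gaussZ D \<sigma>"
  define G where "G = grid D \<times> grid D"
  define N where "N x a = gauss_kernel s a x / Z" for x a
  have "s > 0"
    using assms(2) by (simp add: s_def)
  have "Z \<ge> 1"
    unfolding Z_def using assms(1,2) by (rule gaussZ_ge_1)
  have Z_eq: "Z = (\<Sum>\<^sub>\<infinity>d\<in>grid_Z D. gauss_kernel s d (0, 0))"
    by (simp add: Z_def s_def gaussZ_def gauss_kernel_def)
  have "finite G"
    by (simp add: G_def finite_grid)
  have \<gamma>_nonneg: "\<gamma> i \<ge> 0" if "i \<in> G" for i
    using \<gamma> that by (auto simp: coupling_def G_def)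
  have N_pos: "N x a > 0" for x a
    using \<open>Z \<ge> 1\<close> gauss_kernel_pos by (simp add: N_def)
  have Htilde_eq: "Htilde D \<sigma> f a = (\<Sum>a'\<in>grid D. N a' a * f a')" for f a
    by (simp add: Htilde_def N_def Z_def s_def gauss_kernel_def)
  have Hp: "Htilde D \<sigma> p a = (\<Sum>i\<in>G. \<gamma> i * N (fst i) a)" for a
    unfolding Htilde_eq G_def by (rule coupling_sum_fst[OF \<gamma>])
  have Hq: "Htilde D \<sigma> q a = (\<Sum>i\<in>G. \<gamma> i * N (snd i) a)" for a
    unfolding Htilde_eq G_def by (rule coupling_sum_snd[OF \<gamma>])
  define bound where "bound a = (\<Sum>i\<in>G. \<gamma> i * N (fst i) a * ln (N (fst i) a / N (snd i) a))" for a
  have pointwise: "Htilde D \<sigma> p a * ln (Htilde D \<sigma> p a / Htilde D \<sigma> q a) \<le> bound a" for a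
    unfolding Hp Hq bound_def by (intro log_sum_inequality \<open>finite G\<close> \<gamma>_nonneg N_pos)
  have "(bound has_sum (\<Sum>i\<in>G. \<gamma> i * sqdist2 (fst i) (snd i) / s)) (grid_Z D)"
    unfolding bound_def[abs_def] using \<open>finite G\<close>
  proof (rule has_sum_sum)
    fix i
    assume "i \<in> G"
    then have "fst i \<in> grid D"
      by (simp add: G_def mem_Times_iff)
    then have "fst i \<in> grid_Z D"
      using grid_subset_grid_Z by blast
    have "N (fst i) a * ln (N (fst i) a / N (snd i) a)
        = gauss_kernel s a (fst i) * (sqdist2 a (snd i) - sqdist2 a (fst i)) / (s * Z)" for a
    proof -
      have "N (fst i) a / N (snd i) a = exp ((sqdist2 a (snd i) - sqdist2 a (fst i)) / s)"
        using \<open>Z \<ge> 1\<close> by (simp add: N_def gauss_kernel_def diff_divide_distrib flip: exp_diff)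
      then show ?thesis
        by (simp add: N_def)
    qed
    moreover have "((\<lambda>a. \<gamma> i / (s * Z) * (gauss_kernel s a (fst i) * (sqdist2 a (snd i) - sqdist2 a (fst i))))
        has_sum \<gamma> i / (s * Z) * (sqdist2 (fst i) (snd i) * Z)) (grid_Z D)"
      unfolding Z_eq
      by (intro has_sum_cmult_right has_sum_gauss_kernel_sqdist2_diff assms(1) \<open>s > 0\<close> \<open>fst i \<in> grid_Z D\<close>)
    moreover have "\<gamma> i / (s * Z) * (sqdist2 (fst i) (snd i) * Z) = \<gamma> i * sqdist2 (fst i) (snd i) / s"
      using \<open>Z \<ge> 1\<close> by simp
    ultimately show "((\<lambda>a. \<gamma> i * N (fst i) a * ln (N (fst i) a / N (snd i) a))
        has_sum \<gamma> i * sqdist2 (fst i) (snd i) / s) (grid_Z D)"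
      by (simp add: mult.assoc)
  qed
  then have "KL (Htilde D \<sigma> p) (Htilde D \<sigma> q) (grid_Z D) \<le> (\<Sum>i\<in>G. \<gamma> i * sqdist2 (fst i) (snd i) / s)"
    unfolding KL_def using pointwise \<open>s > 0\<close> \<gamma>_nonneg
    by (intro infsum_le_has_sum sum_nonneg) (auto simp: sqdist2_def)
  then show ?thesis
    by (simp add: G_def s_def sum_divide_distrib)
qed

theorem lemma9:
  fixes D :: nat and \<sigma> :: real and p q :: "real \<times> real \<Rightarrow> real"
  assumes "D > 0" and "\<sigma> > 0"
    and "\<forall>a\<in>grid D. p a \<ge> 0" and "(\<Sum>a\<in>grid D. p a) = 1"
    and "\<forall>a\<in>grid D. q a \<ge> 0" and "(\<Sum>a\<in>grid D. q a) = 1"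
  shows "KL (Htilde D \<sigma> p) (Htilde D \<sigma> q) (grid_Z D) \<le> EMD D p q / (2 * \<sigma>^2)"
proof -
  let ?KL = "KL (Htilde D \<sigma> p) (Htilde D \<sigma> q) (grid_Z D)"
  have "coupling (grid D) p q (\<lambda>(x, y). p x * q y)"
    using assms(3-6) by (rule coupling_product)
  then have nonempty: "{\<gamma>. coupling (grid D) p q \<gamma>} \<noteq> {}"
    by blast
  have "?KL * (2 * \<sigma>^2) \<le> (\<Sum>(x, y)\<in>grid D \<times> grid D. \<gamma> (x, y) * l1dist x y)"
    if \<gamma>: "coupling (grid D) p q \<gamma>" for \<gamma>
  proof -
    have "\<gamma> i * sqdist2 (fst i) (snd i) \<le> \<gamma> i * l1dist (fst i) (snd i)" if "i \<in> grid D \<times> grid D" for i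
      using \<gamma> that by (intro mult_left_mono sqdist2_le_l1dist_grid) (auto simp: coupling_def)
    then have "(\<Sum>i\<in>grid D \<times> grid D. \<gamma> i * sqdist2 (fst i) (snd i)) \<le> (\<Sum>(x, y)\<in>grid D \<times> grid D. \<gamma> (x, y) * l1dist x y)"
      unfolding case_prod_unfold prod.collapse by (rule sum_mono)
    moreover have "?KL * (2 * \<sigma>^2) \<le> (\<Sum>i\<in>grid D \<times> grid D. \<gamma> i * sqdist2 (fst i) (snd i))"
      using KL_Htilde_le_coupling_cost[OF assms(1,2) \<gamma>] assms(2) by (simp add: pos_le_divide_eq)
    ultimately show ?thesis
      by linarith
  qed
  then have "?KL * (2 * \<sigma>^2) \<le> EMD D p q"
    unfolding EMD_eq_Inf_coupling using nonempty by (intro cInf_greatest) auto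
  then show ?thesis
    using assms(2) by (simp add: pos_le_divide_eq)
qed

end
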